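(* Let $T$ be the operator on $H^2$ given by $Tf=\sum_{m=0}^\infty\left(\sum_{n=0}^\infty n!\,\hat f(n+m)\right)z^m$, with domain $D(T)=\{f\in H^2: Tf\in H^2\}$ (i.e. those $f$ for which every inner series converges and the resulting coefficient sequence is square summable). Then $D(T)$ is not shift invariant: there exists $f\in D(T)$ with $zf\notin D(T)$.
   Context: $H^2$ is the Hardy space of analytic functions $f(z)=\sum_{n\ge0}\hat f(n)z^n$ on the unit disc with $\sum|\hat f(n)|^2<\infty$. *)

theory Defs
  imports "HOL-Analysis.Analysis"
begin

text \<open>Elements of H^2 are represented by their Taylor coefficient sequences
  f = (hat f(n))_n, with the square summability condition.\<close>

definition H2 :: "(nat \<Rightarrow> complex) set" where
  "H2 = {f. summable (\<lambda>n. (cmod (f n))\<^sup>2)}"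

definition T_coeff :: "(nat \<Rightarrow> complex) \<Rightarrow> nat \<Rightarrow> complex" where
  "T_coeff f m = (\<Sum>n. of_nat (fact n) * f (n + m))"

definition domT :: "(nat \<Rightarrow> complex) set" where
  "domT = {f \<in> H2. (\<forall>m. summable (\<lambda>n. of_nat (fact n) * f (n + m))) \<and> T_coeff f \<in> H2}"

definition mult_z :: "(nat \<Rightarrow> complex) \<Rightarrow> nat \<Rightarrow> complex" where
  "mult_z f n = (if n = 0 then 0 else f (n - 1))"

end

theory Submission
  imports Defs
begin

text \<open>If the coefficients of \<open>f\<close> are \<open>a n / n!\<close> with \<open>a\<close> absolutely summable, the
  ratios \<open>n! / (n + m)! \<le> 1 / m!\<close> give \<open>|(Tf)^(m)| \<le> \<parallel>a\<parallel>\<^sub>1 / m!\<close>, so \<open>f \<in> D(T)\<close>.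
  On the other hand the \<open>m = 0\<close> series for \<open>zf\<close> has terms \<open>n! \<hat>f(n - 1) = n a(n - 1)\<close>,
  which must tend to zero if \<open>zf \<in> D(T)\<close>. A summable \<open>a\<close> supported on the powers of two
  with \<open>a(2^j) = 2^-j\<close> violates this.\<close>

lemma fact_mult_fact_le_fact: "fact m * fact n \<le> (fact (m + n) :: nat)"
  by (rule dvd_imp_le[OF fact_fact_dvd_fact]) simp

lemma norm_le_suminf_norm:
  assumes "summable (\<lambda>n. norm (a n))"
  shows "norm (a n) \<le> (\<Sum>k. norm (a k))"
  using sum_le_suminf[OF assms, of "{n}"] by simp

lemma H2_if_norm_le_inverse_fact:
  assumes "\<And>n. norm (f n) \<le> C / fact n"
  shows "f \<in> H2"
proof -
  have bound: "(cmod (f n))\<^sup>2 \<le> C\<^sup>2 * inverse (fact n)" for n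
  proof -
    have "(cmod (f n))\<^sup>2 \<le> (C / fact n)\<^sup>2"
      using assms[of n] by (intro power_mono) auto
    also have "\<dots> = C\<^sup>2 * inverse (fact n) * inverse (fact n)"
      by (simp add: power2_eq_square field_simps)
    also have "\<dots> \<le> C\<^sup>2 * inverse (fact n)"
      by (intro mult_left_le) (auto simp: field_simps)
    finally show ?thesis .
  qed
  have "summable (\<lambda>n. C\<^sup>2 * inverse (fact n :: real))"
    using summable_exp[of "1::real"] by (intro summable_mult) simp
  then have "summable (\<lambda>n. (cmod (f n))\<^sup>2)"
    by (rule summable_comparison_test'[of _ 0]) (simp add: bound)
  then show ?thesis
    unfolding H2_def by simp
qed

lemma norm_T_coeff_term_le:
  fixes a :: "nat \<Rightarrow> 'a::real_normed_field"
  shows "norm (of_nat (fact n) * (a (n + m) / fact (n + m))) \<le> norm (a (n + m)) / fact m"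
proof -
  have "real (fact m * fact n) \<le> real (fact (m + n))"
    by (simp only: of_nat_le_iff fact_mult_fact_le_fact)
  then have "(fact n :: real) / fact (n + m) \<le> 1 / fact m"
    by (simp add: field_simps add.commute)
  then have "norm (a (n + m)) * (fact n / fact (n + m)) \<le> norm (a (n + m)) * (1 / fact m)"
    by (rule mult_left_mono) simp
  then show ?thesis
    by (simp add: norm_mult norm_divide mult_ac)
qed

lemma divide_fact_in_domT:
  fixes a :: "nat \<Rightarrow> complex"
  assumes summable: "summable (\<lambda>n. norm (a n))"
  shows "(\<lambda>n. a n / fact n) \<in> domT"
proof -
  define f where "f n = a n / fact n" for n
  define A where "A = (\<Sum>n. norm (a n))"
  have tail: "summable (\<lambda>n. norm (a (n + m)) / fact m)" for m
    using summable_ignore_initial_segment[OF summable, of m] by (rule summable_divide)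
  have series: "summable (\<lambda>n. norm (of_nat (fact n) * f (n + m)))" for m
    unfolding f_def using norm_T_coeff_term_le
    by (intro summable_comparison_test'[OF tail[of m], of 0]) simp
  have "norm (T_coeff f m) \<le> A / fact m" for m
  proof -
    have "norm (T_coeff f m) \<le> (\<Sum>n. norm (of_nat (fact n) * f (n + m)))"
      unfolding T_coeff_def by (rule summable_norm[OF series])
    also have "\<dots> \<le> (\<Sum>n. norm (a (n + m)) / fact m)"
      unfolding f_def
      by (rule suminf_le[OF _ series[of m, unfolded f_def] tail[of m]])
        (rule norm_T_coeff_term_le)
    also have "\<dots> = (\<Sum>n. norm (a (n + m))) / fact m"
      by (rule suminf_divide[OF summable_ignore_initial_segment[OF summable]])
    also have "(\<Sum>n. norm (a (n + m))) \<le> A"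
      unfolding A_def using suminf_split_initial_segment[OF summable, of m]
      by (simp add: sum_nonneg)
    finally show ?thesis
      by (simp add: divide_right_mono)
  qed
  moreover have "norm (f n) \<le> A / fact n" for n
    unfolding f_def A_def using norm_le_suminf_norm[OF summable, of n]
    by (simp add: norm_divide divide_right_mono)
  ultimately show ?thesis
    using series unfolding domT_def f_def[symmetric]
    by (auto intro: H2_if_norm_le_inverse_fact summable_norm_cancel)
qed

lemma mult_z_in_domT_imp_tendsto_zero:
  assumes "mult_z f \<in> domT"
  shows "(\<lambda>n. of_nat (fact (Suc n)) * f n) \<longlonglongrightarrow> 0"
proof -
  have "summable (\<lambda>n. of_nat (fact n) * mult_z f (n + 0))"
    using assms unfolding domT_def by blast
  then have "(\<lambda>n. of_nat (fact n) * mult_z f n) \<longlonglongrightarrow> 0"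
    by (simp add: summable_LIMSEQ_zero)
  then show ?thesis
    using LIMSEQ_Suc by (fastforce simp: mult_z_def)
qed

definition dyadic_harmonic :: "nat \<Rightarrow> real" where
  "dyadic_harmonic n = (if n \<in> range (\<lambda>j. 2 ^ j) then 1 / real n else 0)"

lemma dyadic_harmonic_nonneg: "dyadic_harmonic n \<ge> 0"
  by (simp add: dyadic_harmonic_def)

lemma dyadic_harmonic_power_of_two: "dyadic_harmonic (2 ^ j) = 1 / 2 ^ j"
  by (auto simp: dyadic_harmonic_def)

lemma summable_dyadic_harmonic: "summable dyadic_harmonic"
proof -
  have "strict_mono (\<lambda>j::nat. (2::nat) ^ j)"
    by (rule strict_monoI) simp
  moreover have "summable (\<lambda>j. dyadic_harmonic (2 ^ j))"
    using summable_geometric[of "1/2::real"]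
    by (simp add: dyadic_harmonic_power_of_two power_one_over)
  ultimately show ?thesis
    using summable_mono_reindex[of "\<lambda>j. 2 ^ j" dyadic_harmonic]
    by (simp add: dyadic_harmonic_def)
qed

lemma Suc_times_dyadic_harmonic_not_tendsto_zero:
  "\<not> (\<lambda>n. real (Suc n) * dyadic_harmonic n) \<longlonglongrightarrow> 0"
proof
  assume "(\<lambda>n. real (Suc n) * dyadic_harmonic n) \<longlonglongrightarrow> 0"
  then obtain N where N: "\<And>n. n \<ge> N \<Longrightarrow> real (Suc n) * dyadic_harmonic n < 1"
    using LIMSEQ_D[of _ 0 1] dyadic_harmonic_nonneg by fastforce
  have "N \<le> 2 ^ N"
    using less_exp[of N] by linarith
  from N[OF this] show False
    by (simp add: dyadic_harmonic_power_of_two field_simps)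
qed

theorem corollary2:
  shows "\<exists>f \<in> domT. mult_z f \<notin> domT"
proof
  let ?a = "\<lambda>n. complex_of_real (dyadic_harmonic n)"
  show "(\<lambda>n. ?a n / fact n) \<in> domT"
    using summable_dyadic_harmonic dyadic_harmonic_nonneg
    by (intro divide_fact_in_domT) simp
  have "(\<lambda>n. of_nat (fact (Suc n)) * (?a n / fact n))
      = (\<lambda>n. complex_of_real (real (Suc n) * dyadic_harmonic n))"
    by (rule ext) (simp add: field_simps)
  then show "mult_z (\<lambda>n. ?a n / fact n) \<notin> domT"
    using mult_z_in_domT_imp_tendsto_zero Suc_times_dyadic_harmonic_not_tendsto_zero
    by (metis tendsto_of_real_iff of_real_0)
qed

end
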